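(* Consider a market with $n$ goods, supplies $w_1,\dots,w_n>0$ and demand functions $x_i:(0,\infty)^n\to(0,\infty)$ satisfying (fixed spending) $\sum_i p_ix_i(p)=M$ for all $p$, for a constant $M>0$, and (WGS) for all $j\ne i$, $x_j(p)$ is non-decreasing in $p_i$. Let $\phi_j(q)=q_j|x_j(q)-w_j|$. Fix $p$ and $i$ with $x_i(p)\ne w_i$, and let $p'=(p_{-i},p_i')$ differ from $p$ only in coordinate $i$, where $p_i'>p_i$ if $x_i(p)>w_i$ and $p_i'<p_i$ if $x_i(p)<w_i$, and where the change is same-side: $x_i(p')\ge w_i$ if $x_i(p)>w_i$, and $x_i(p')\le w_i$ if $x_i(p)<w_i$. Then \[ \phi_i(p)-\phi_i(p')\ \ge\ w_i|p_i'-p_i|+\sum_{j\ne i}\big|\phi_j(p)-\phi_j(p')\big|. \] In particular $\sum_j\phi_j(p)-\sum_j\phi_j(p')\ge w_i|p_i'-p_i|$.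
   Context: $(p_{-i},p_i')$ denotes the price vector $p$ with its $i$-th entry replaced by $p_i'$. *)

theory Defs
  imports "HOL-Analysis.Analysis"
begin

text \<open>Goods are indexed by 0..n-1. A price vector is a function nat => real whose
entries on the goods are strictly positive.\<close>

definition pos_prices :: "nat \<Rightarrow> (nat \<Rightarrow> real) \<Rightarrow> bool" where
  "pos_prices n p \<longleftrightarrow> (\<forall>k<n. p k > 0)"

definition fixed_spending_wgs_market ::
  "nat \<Rightarrow> (nat \<Rightarrow> real) \<Rightarrow> real \<Rightarrow> (nat \<Rightarrow> (nat \<Rightarrow> real) \<Rightarrow> real) \<Rightarrow> bool" where
  "fixed_spending_wgs_market n w M x \<longleftrightarrow>
     M > 0 \<and> (\<forall>k<n. w k > 0) \<and>
     (\<forall>p. pos_prices n p \<longrightarrow> (\<forall>k<n. x k p > 0)) \<and>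
     (\<forall>p. pos_prices n p \<longrightarrow> (\<Sum>k<n. p k * x k p) = M) \<and>
     (\<forall>p i j t. pos_prices n p \<longrightarrow> i < n \<longrightarrow> j < n \<longrightarrow> j \<noteq> i \<longrightarrow> p i \<le> t \<longrightarrow>
        x j p \<le> x j (p(i := t)))"

definition phi :: "(nat \<Rightarrow> (nat \<Rightarrow> real) \<Rightarrow> real) \<Rightarrow> (nat \<Rightarrow> real) \<Rightarrow> nat \<Rightarrow> (nat \<Rightarrow> real) \<Rightarrow> real" where
  "phi x w j q = q j * \<bar>x j q - w j\<bar>"

end

theory Submission
  imports Defs
begin

(* Let q = p(i := pi') and R = {..<n} - {i}.  Fixed spending gives the
   budget identity  sum_{j in R} p_j (x_j(q) - x_j(p)) = p_i x_i(p) - pi' x_i(q) =: S,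
   i.e. whatever good i's spending loses is taken up by the other goods.  By weak gross
   substitutes every term on the left has the sign of pi' - p_i, so S is also the sum of
   the absolute values of these terms.  For good i the same-side hypothesis makes the
   absolute values in phi_i explicit, and a short computation gives
   phi_i(p) - phi_i(q) = w_i |pi' - p_i| + |S|.  Since q_j = p_j for j in R, the reverse
   triangle inequality bounds |phi_j(p) - phi_j(q)| by p_j |x_j(q) - x_j(p)|, whose sum
   is |S|; this is the first claim. *)

lemma pos_prices_update:
  assumes "pos_prices n p" and "t > 0"
  shows "pos_prices n (p(i := t))"
  using assms unfolding pos_prices_def by auto

lemma spending_shift_to_other_goods:
  assumes mkt: "fixed_spending_wgs_market n w M x"
    and p_pos: "pos_prices n p" and i_lt: "i < n" and t_pos: "t > 0"
  shows "(\<Sum>j\<in>{..<n} - {i}. p j * (x j (p(i := t)) - x j p))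
           = p i * x i p - t * x i (p(i := t))"
proof -
  let ?q = "p(i := t)" and ?R = "{..<n} - {i}"
  have i_in: "i \<in> {..<n}" using i_lt by simp
  have "(\<Sum>k<n. p k * x k p) = M" "(\<Sum>k<n. ?q k * x k ?q) = M"
    using mkt p_pos pos_prices_update[OF p_pos t_pos]
    unfolding fixed_spending_wgs_market_def by blast+
  moreover have "(\<Sum>k<n. p k * x k p) = p i * x i p + (\<Sum>k\<in>?R. p k * x k p)"
    using sum.remove[OF _ i_in] by simp
  moreover have "(\<Sum>k<n. ?q k * x k ?q) = t * x i ?q + (\<Sum>k\<in>?R. p k * x k ?q)"
    using sum.remove[OF _ i_in, of "\<lambda>k. ?q k * x k ?q"] by simp
  ultimately show ?thesis by (simp add: sum_subtractf right_diff_distrib)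
qed

text \<open>Weak gross substitutes in both directions: raising the price of good \<open>i\<close> weakly
  raises every other demand, and lowering it weakly lowers every other demand (the latter
  is WGS applied at the lowered price vector).\<close>
lemma wgs_other_demand_up:
  assumes "fixed_spending_wgs_market n w M x" and "pos_prices n p"
    and "i < n" and "j < n" and "j \<noteq> i" and "p i \<le> t"
  shows "x j p \<le> x j (p(i := t))"
  using assms unfolding fixed_spending_wgs_market_def by blast

lemma wgs_other_demand_down:
  assumes mkt: "fixed_spending_wgs_market n w M x" and p_pos: "pos_prices n p"
    and "i < n" and "j < n" and "j \<noteq> i" and "t > 0" and "t \<le> p i"
  shows "x j (p(i := t)) \<le> x j p"
proof -
  have "x j (p(i := t)) \<le> x j ((p(i := t))(i := p i))"
    by (rule wgs_other_demand_up[OF mkt pos_prices_update[OF p_pos \<open>t > 0\<close>]])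
      (use assms in simp_all)
  then show ?thesis by simp
qed

lemma spending_changes_sign:
  assumes mkt: "fixed_spending_wgs_market n w M x" and p_pos: "pos_prices n p"
    and i_lt: "i < n" and t_pos: "t > 0"
  defines "d \<equiv> \<lambda>j. p j * (x j (p(i := t)) - x j p)"
  shows "(p i \<le> t \<longrightarrow> (\<forall>j\<in>{..<n} - {i}. 0 \<le> d j))
       \<and> (t \<le> p i \<longrightarrow> (\<forall>j\<in>{..<n} - {i}. d j \<le> 0))"
proof -
  have pj: "\<And>j. j < n \<Longrightarrow> 0 \<le> p j" using p_pos unfolding pos_prices_def by (auto intro: less_imp_le)
  show ?thesis
    using wgs_other_demand_up[OF mkt p_pos i_lt] wgs_other_demand_down[OF mkt p_pos i_lt] pj t_pos
    unfolding d_def by (auto intro!: mult_nonneg_nonpos)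
qed

lemma sum_abs_of_same_sign:
  fixes f :: "'a \<Rightarrow> 'b::ordered_ab_group_add_abs"
  assumes "(\<forall>j\<in>A. 0 \<le> f j) \<or> (\<forall>j\<in>A. f j \<le> 0)"
  shows "(\<Sum>j\<in>A. \<bar>f j\<bar>) = \<bar>\<Sum>j\<in>A. f j\<bar>"
  using assms
proof
  assume "\<forall>j\<in>A. 0 \<le> f j"
  then show ?thesis by (simp add: sum_nonneg)
next
  assume nonpos: "\<forall>j\<in>A. f j \<le> 0"
  then have "(\<Sum>j\<in>A. \<bar>f j\<bar>) = - (\<Sum>j\<in>A. f j)"
    by (simp add: sum_negf[symmetric])
  moreover have "(\<Sum>j\<in>A. f j) \<le> 0" using nonpos by (simp add: sum_nonpos)
  ultimately show ?thesis by simp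
qed

text \<open>A good whose price is unchanged: its imbalance term moves by at most its price
  times its change of demand (reverse triangle inequality).\<close>
lemma phi_change_le_demand_change:
  assumes "q j = p j" and "p j > 0"
  shows "\<bar>phi x w j p - phi x w j q\<bar> \<le> p j * \<bar>x j q - x j p\<bar>"
proof -
  have "\<bar>phi x w j p - phi x w j q\<bar> = p j * \<bar>\<bar>x j p - w j\<bar> - \<bar>x j q - w j\<bar>\<bar>"
    using assms unfolding phi_def by (simp add: right_diff_distrib[symmetric] abs_mult)
  also have "\<dots> \<le> p j * \<bar>x j q - x j p\<bar>"
    using assms by (intro mult_left_mono) auto
  finally show ?thesis .
qed

text \<open>Here \<open>a, b\<close> are the old and new prices and \<open>u, v\<close> the old and new
  demands.\<close>
lemma own_phi_drop:
  fixes a b u v wi :: real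
  assumes "(wi < u \<and> a < b \<and> wi \<le> v \<and> 0 \<le> a * u - b * v)
         \<or> (u < wi \<and> b < a \<and> v \<le> wi \<and> a * u - b * v \<le> 0)"
  shows "a * \<bar>u - wi\<bar> - b * \<bar>v - wi\<bar> = wi * \<bar>b - a\<bar> + \<bar>a * u - b * v\<bar>"
  using assms by (auto simp: algebra_simps)

lemma sum_diff_ge_of_dominant_term:
  fixes f g :: "'a \<Rightarrow> real"
  assumes "finite A" and "i \<in> A"
    and "f i - g i \<ge> c + (\<Sum>j\<in>A - {i}. \<bar>f j - g j\<bar>)"
  shows "sum f A - sum g A \<ge> c"
proof -
  have "- (\<Sum>j\<in>A - {i}. \<bar>f j - g j\<bar>) \<le> (\<Sum>j\<in>A - {i}. f j - g j)"
    using sum_abs[of "\<lambda>j. f j - g j" "A - {i}"] by linarith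
  moreover have "sum f A - sum g A = f i - g i + (\<Sum>j\<in>A - {i}. f j - g j)"
    using sum.remove[OF assms(1,2), of f] sum.remove[OF assms(1,2), of g]
    by (simp add: sum_subtractf)
  ultimately show ?thesis using assms(3) by linarith
qed

theorem mainTheorem6:
  fixes n :: nat and w :: "nat \<Rightarrow> real" and M :: real
    and x :: "nat \<Rightarrow> (nat \<Rightarrow> real) \<Rightarrow> real"
    and p :: "nat \<Rightarrow> real" and i :: nat and pi' :: real
  assumes mkt: "fixed_spending_wgs_market n w M x"
    and p_pos: "pos_prices n p"
    and i_lt: "i < n"
    and pi'_pos: "pi' > 0"
    and ne: "x i p \<noteq> w i"
    and up: "x i p > w i \<Longrightarrow> pi' > p i \<and> x i (p(i := pi')) \<ge> w i"
    and down: "x i p < w i \<Longrightarrow> pi' < p i \<and> x i (p(i := pi')) \<le> w i"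
  shows "(phi x w i p - phi x w i (p(i := pi')) \<ge>
           w i * \<bar>pi' - p i\<bar> +
           (\<Sum>j\<in>{..<n} - {i}. \<bar>phi x w j p - phi x w j (p(i := pi'))\<bar>)) \<and>
         ((\<Sum>j<n. phi x w j p) - (\<Sum>j<n. phi x w j (p(i := pi'))) \<ge> w i * \<bar>pi' - p i\<bar>)"
proof -
  define q where "q = p(i := pi')"
  define R where "R = {..<n} - {i}"
  define S where "S = p i * x i p - pi' * x i q"
  have shift: "(\<Sum>j\<in>R. p j * (x j q - x j p)) = S"
    using spending_shift_to_other_goods[OF mkt p_pos i_lt pi'_pos] unfolding q_def R_def S_def .
  have signs: "(p i \<le> pi' \<longrightarrow> (\<forall>j\<in>R. 0 \<le> p j * (x j q - x j p)))
             \<and> (pi' \<le> p i \<longrightarrow> (\<forall>j\<in>R. p j * (x j q - x j p) \<le> 0))"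
    using spending_changes_sign[OF mkt p_pos i_lt pi'_pos] unfolding q_def R_def by simp
  have S_sign: "(p i \<le> pi' \<longrightarrow> 0 \<le> S) \<and> (pi' \<le> p i \<longrightarrow> S \<le> 0)"
    using signs shift by (auto intro: sum_nonneg sum_nonpos)
  have shifted_abs: "(\<Sum>j\<in>R. p j * \<bar>x j q - x j p\<bar>) = \<bar>S\<bar>"
  proof -
    have "\<And>j. j \<in> R \<Longrightarrow> p j * \<bar>x j q - x j p\<bar> = \<bar>p j * (x j q - x j p)\<bar>"
      using p_pos unfolding R_def pos_prices_def by (simp add: abs_mult abs_of_pos)
    moreover have "(\<forall>j\<in>R. 0 \<le> p j * (x j q - x j p)) \<or> (\<forall>j\<in>R. p j * (x j q - x j p) \<le> 0)"
      using signs by linarith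
    ultimately show ?thesis
      using sum_abs_of_same_sign[of R "\<lambda>j. p j * (x j q - x j p)"] shift by simp
  qed
  have own: "phi x w i p - phi x w i q = w i * \<bar>pi' - p i\<bar> + \<bar>S\<bar>"
    using own_phi_drop[of "w i" "x i p" "p i" pi' "x i q"] up down ne S_sign
    unfolding phi_def S_def q_def by fastforce
  have others: "(\<Sum>j\<in>R. \<bar>phi x w j p - phi x w j q\<bar>) \<le> \<bar>S\<bar>"
    unfolding shifted_abs[symmetric]
    using phi_change_le_demand_change[of q _ p] p_pos
    unfolding R_def q_def pos_prices_def by (intro sum_mono) auto
  have first: "phi x w i p - phi x w i q \<ge> w i * \<bar>pi' - p i\<bar> + (\<Sum>j\<in>R. \<bar>phi x w j p - phi x w j q\<bar>)"
    using own others by linarith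
  then show ?thesis
    using sum_diff_ge_of_dominant_term[of "{..<n}" i] i_lt unfolding q_def R_def by simp
qed

end
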